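(* Let $M$ be an $n$-counter Minsky machine and $k_1,\dots,k_n$ non-negative integers. If the sequent $$l_1\otimes r_1^{k_1}\otimes\cdots\otimes r_n^{k_n},\ !\Phi_M,\ !\mathcal{K}\ \vdash\ l_0$$ is derivable in (propositional) linear logic, then $M$ can go from the initial configuration $(L_1,k_1,\dots,k_n)$ to the halting configuration $(L_0,0,\dots,0)$.
   Context: An $n$-counter Minsky machine $M$ has counters $x_1,\dots,x_n$ with non-negative integer values and a finite list of instructions labelled by labels $L_0,L_1,\dots$, each of one of the forms: (1) $L_i: x_m:=x_m+1$; goto $L_j$; (2) $L_i: x_m:=x_m-1$; goto $L_j$; (3) $L_i$: if $x_m>0$ then goto $L_j$; (4) $L_i$: if $x_m=0$ then goto $L_j$; (5) $L_0$: halt; where $i\ge1$. A configuration is $(L,c_1,\dots,c_n)$; a computation is a finite sequence of configurations each obtained from the previous by applying an instruction of $M$ (an instruction at $L_i$ applies only in a configuration with label $L_i$; type (2) requires $x_m\ge1$, type (3) requires $x_m>0$, type (4) requires $x_m=0$). Encoding: distinct propositional literals $r_1,\dots,r_n$, $l_0,l_1,\dots$ (one per label), $\kappa_1,\dots,\kappa_n$; $r^k$ is the tensor of $k$ copies of $r$ (omitted when $k=0$). For an instruction $I$ of type (1)–(4): $\varphi_{(1)}=l_i\multimap(l_j\otimes r_m)$, $\varphi_{(2)}=(l_i\otimes r_m)\multimap l_j$, $\varphi_{(3)}=(l_i\otimes r_m)\multimap(l_j\otimes r_m)$, $\varphi_{(4)}=l_i\multimap(l_j\oplus\kappa_m)$.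 $\Phi_M$ is the multiset of $\varphi_I$ over the instructions of $M$ of types (1)–(4). $\mathcal{K}=\bigcup_{m=1}^n\mathcal{K}_m$, where $\mathcal{K}_m$ consists of $\kappa_m\multimap l_0$ and $(\kappa_m\otimes r_i)\multimap\kappa_m$ for every $i\ne m$. $!\Phi$ denotes $\{!A: A\in\Phi\}$. *)

theory Defs
  imports Main "HOL-Library.Multiset"
begin

datatype 'a form =
    Atom 'a
  | One | Bot | Top | Zero
  | Neg "'a form"
  | Tensor "'a form" "'a form"
  | Par "'a form" "'a form"
  | With "'a form" "'a form"
  | Plus "'a form" "'a form"
  | Lolli "'a form" "'a form"
  | OfCourse "'a form"
  | WhyNot "'a form"

inductive derivable :: "'a form multiset \<Rightarrow> 'a form multiset \<Rightarrow> bool" where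
  ax:      "derivable {#A#} {#A#}"
| cut:     "derivable G (add_mset A D) \<Longrightarrow> derivable (add_mset A G') D'
             \<Longrightarrow> derivable (G + G') (D + D')"
| negL:    "derivable G (add_mset A D) \<Longrightarrow> derivable (add_mset (Neg A) G) D"
| negR:    "derivable (add_mset A G) D \<Longrightarrow> derivable G (add_mset (Neg A) D)"
| oneL:    "derivable G D \<Longrightarrow> derivable (add_mset One G) D"
| oneR:    "derivable {#} {#One#}"
| botL:    "derivable {#Bot#} {#}"
| botR:    "derivable G D \<Longrightarrow> derivable G (add_mset Bot D)"
| topR:    "derivable G (add_mset Top D)"
| zeroL:   "derivable (add_mset Zero G) D"
| tensorL: "derivable (add_mset A (add_mset B G)) D \<Longrightarrow> derivable (add_mset (Tensor A B) G) D"
| tensorR: "derivable G (add_mset A D) \<Longrightarrow> derivable G' (add_mset B D')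
             \<Longrightarrow> derivable (G + G') (add_mset (Tensor A B) (D + D'))"
| parL:    "derivable (add_mset A G) D \<Longrightarrow> derivable (add_mset B G') D'
             \<Longrightarrow> derivable (add_mset (Par A B) (G + G')) (D + D')"
| parR:    "derivable G (add_mset A (add_mset B D)) \<Longrightarrow> derivable G (add_mset (Par A B) D)"
| withL1:  "derivable (add_mset A G) D \<Longrightarrow> derivable (add_mset (With A B) G) D"
| withL2:  "derivable (add_mset B G) D \<Longrightarrow> derivable (add_mset (With A B) G) D"
| withR:   "derivable G (add_mset A D) \<Longrightarrow> derivable G (add_mset B D)
             \<Longrightarrow> derivable G (add_mset (With A B) D)"
| plusL:   "derivable (add_mset A G) D \<Longrightarrow> derivable (add_mset B G) D
             \<Longrightarrow> derivable (add_mset (Plus A B) G) D"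
| plusR1:  "derivable G (add_mset A D) \<Longrightarrow> derivable G (add_mset (Plus A B) D)"
| plusR2:  "derivable G (add_mset B D) \<Longrightarrow> derivable G (add_mset (Plus A B) D)"
| lolliL:  "derivable G (add_mset A D) \<Longrightarrow> derivable (add_mset B G') D'
             \<Longrightarrow> derivable (add_mset (Lolli A B) (G + G')) (D + D')"
| lolliR:  "derivable (add_mset A G) (add_mset B D) \<Longrightarrow> derivable G (add_mset (Lolli A B) D)"
| ocDer:   "derivable (add_mset A G) D \<Longrightarrow> derivable (add_mset (OfCourse A) G) D"
| ocWeak:  "derivable G D \<Longrightarrow> derivable (add_mset (OfCourse A) G) D"
| ocContr: "derivable (add_mset (OfCourse A) (add_mset (OfCourse A) G)) D
             \<Longrightarrow> derivable (add_mset (OfCourse A) G) D"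
| ocProm:  "derivable (image_mset OfCourse G) (add_mset A (image_mset WhyNot D))
             \<Longrightarrow> derivable (image_mset OfCourse G) (add_mset (OfCourse A) (image_mset WhyNot D))"
| wnDer:   "derivable G (add_mset A D) \<Longrightarrow> derivable G (add_mset (WhyNot A) D)"
| wnWeak:  "derivable G D \<Longrightarrow> derivable G (add_mset (WhyNot A) D)"
| wnContr: "derivable G (add_mset (WhyNot A) (add_mset (WhyNot A) D))
             \<Longrightarrow> derivable G (add_mset (WhyNot A) D)"
| wnProm:  "derivable (add_mset A (image_mset OfCourse G)) (image_mset WhyNot D)
             \<Longrightarrow> derivable (add_mset (WhyNot A) (image_mset OfCourse G)) (image_mset WhyNot D)"

text \<open>Instructions of types (1)-(4); the first argument is the counter index m,
  the second the target label j.  Label \<open>L_0\<close> is the halting label (type (5)).\<close>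
datatype instr = Inc nat nat | Dec nat nat | JPos nat nat | JZero nat nat

fun instr_counter :: "instr \<Rightarrow> nat" where
  "instr_counter (Inc m j) = m"
| "instr_counter (Dec m j) = m"
| "instr_counter (JPos m j) = m"
| "instr_counter (JZero m j) = m"

type_synonym machine = "(nat \<times> instr) list"

definition wf_machine :: "nat \<Rightarrow> machine \<Rightarrow> bool" where
  "wf_machine n M \<longleftrightarrow> (\<forall>(i, I) \<in> set M. 1 \<le> i \<and> instr_counter I \<in> {1..n})"

text \<open>Configuration: a label together with the counter values (counter m is \<open>c m\<close>, 1 \<le> m \<le> n).\<close>
type_synonym config = "nat \<times> (nat \<Rightarrow> nat)"

fun instr_step :: "instr \<Rightarrow> (nat \<Rightarrow> nat) \<Rightarrow> config \<Rightarrow> bool" where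
  "instr_step (Inc m j) c (L', c') \<longleftrightarrow> L' = j \<and> c' = c(m := c m + 1)"
| "instr_step (Dec m j) c (L', c') \<longleftrightarrow> c m \<ge> 1 \<and> L' = j \<and> c' = c(m := c m - 1)"
| "instr_step (JPos m j) c (L', c') \<longleftrightarrow> c m > 0 \<and> L' = j \<and> c' = c"
| "instr_step (JZero m j) c (L', c') \<longleftrightarrow> c m = 0 \<and> L' = j \<and> c' = c"

definition step :: "machine \<Rightarrow> config \<Rightarrow> config \<Rightarrow> bool" where
  "step M C C' \<longleftrightarrow> (\<exists>(i, I) \<in> set M. fst C = i \<and> instr_step I (snd C) C')"

definition reaches :: "machine \<Rightarrow> config \<Rightarrow> config \<Rightarrow> bool" where
  "reaches M = (step M)\<^sup>*\<^sup>*"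

datatype lit = R nat | Lab nat | Kap nat

fun phi :: "nat \<times> instr \<Rightarrow> lit form" where
  "phi (i, Inc m j) = Lolli (Atom (Lab i)) (Tensor (Atom (Lab j)) (Atom (R m)))"
| "phi (i, Dec m j) = Lolli (Tensor (Atom (Lab i)) (Atom (R m))) (Atom (Lab j))"
| "phi (i, JPos m j) = Lolli (Tensor (Atom (Lab i)) (Atom (R m))) (Tensor (Atom (Lab j)) (Atom (R m)))"
| "phi (i, JZero m j) = Lolli (Atom (Lab i)) (Plus (Atom (Lab j)) (Atom (Kap m)))"

definition Phi :: "machine \<Rightarrow> lit form multiset" where
  "Phi M = mset (map phi M)"

definition Kset_m :: "nat \<Rightarrow> nat \<Rightarrow> lit form multiset" where
  "Kset_m n m = add_mset (Lolli (Atom (Kap m)) (Atom (Lab 0)))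
      (mset (map (\<lambda>i. Lolli (Tensor (Atom (Kap m)) (Atom (R i))) (Atom (Kap m)))
                 (filter (\<lambda>i. i \<noteq> m) [1..<n+1])))"

definition Kset :: "nat \<Rightarrow> lit form multiset" where
  "Kset n = (\<Sum>m \<in> {1..n}. Kset_m n m)"

fun big_tensor :: "'a form list \<Rightarrow> 'a form" where
  "big_tensor [] = One"
| "big_tensor [A] = A"
| "big_tensor (A # As) = Tensor A (big_tensor As)"

definition init_formula :: "nat \<Rightarrow> (nat \<Rightarrow> nat) \<Rightarrow> lit form" where
  "init_formula n k = big_tensor (Atom (Lab 1) # concat (map (\<lambda>i. replicate (k i) (Atom (R i))) [1..<n+1]))"

end

theory Submission
  imports Defs "HOL-Library.Set_Algebras"
begin

text \<open>Proof idea: phase semantics. Formulas are interpreted as sets of multisets of literals,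
  orthogonality being taken with respect to a pole that contains \<open>l_i + r_1^c_1 + ... + r_n^c_n\<close>
  exactly when M halts from \<open>(L_i, c)\<close> with all counters zero, and \<open>\<kappa>_m + rs\<close> exactly when
  \<open>rs\<close> contains no \<open>r_m\<close>. For this pole every formula of \<open>\<Phi>_M\<close> and \<open>K\<close> is valid, since each
  instruction can be simulated backwards and \<open>\<kappa>_m\<close> witnesses that counter m is empty; soundness
  of the sequent calculus then places the multiset of the initial configuration in the pole.\<close>

definition orth :: "'a::comm_monoid_add set \<Rightarrow> 'a set \<Rightarrow> 'a set" where
  "orth P X = {y. \<forall>x\<in>X. x + y \<in> P}"

abbreviation biorth :: "'a::comm_monoid_add set \<Rightarrow> 'a set \<Rightarrow> 'a set" where
  "biorth P X \<equiv> orth P (orth P X)"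

lemma singleton_set_plus [simp]: "{x} + {y} = {x + y}"
  by (simp add: set_plus_def)

lemma subset_orth_iff: "Y \<subseteq> orth P X \<longleftrightarrow> X + Y \<subseteq> P"
  by (auto simp: orth_def set_plus_def)

lemma subset_orth_swap: "X \<subseteq> orth P Y \<longleftrightarrow> Y \<subseteq> orth P X"
  by (simp add: subset_orth_iff add.commute)

lemma mem_orth_iff: "y \<in> orth P X \<longleftrightarrow> X + {y} \<subseteq> P"
  using subset_orth_iff[of "{y}" P X] by simp

lemma orth_Un: "orth P (X \<union> Y) = orth P X \<inter> orth P Y"
  by (auto simp: orth_def)

lemma orth_antimono: "X \<subseteq> Y \<Longrightarrow> orth P Y \<subseteq> orth P X"
  by (auto simp: orth_def)

lemma subset_biorth: "X \<subseteq> biorth P X"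
  using subset_orth_swap[of X P "orth P X"] by simp

lemma orth_biorth [simp]: "orth P (biorth P X) = orth P X"
  by (rule antisym[OF orth_antimono[OF subset_biorth] subset_biorth])

lemma orth_zero: "orth P {0} = P"
  by (simp add: orth_def)

lemma orth_add_subset_iff: "orth P X + Y \<subseteq> P \<longleftrightarrow> Y \<subseteq> biorth P X"
  by (simp add: subset_orth_iff)

lemma orth_add_subset: "Y \<subseteq> X \<Longrightarrow> orth P X + Y \<subseteq> P"
  unfolding orth_add_subset_iff by (erule order_trans) (rule subset_biorth)

lemma biorth_add_subset_iff: "biorth P X + Y \<subseteq> P \<longleftrightarrow> X + Y \<subseteq> P"
  using subset_orth_iff[of Y P "biorth P X"] subset_orth_iff[of Y P X] by simp

lemma biorth_add_biorth: "biorth P X + biorth P Y \<subseteq> biorth P (X + Y)"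
proof -
  define Z where "Z = orth P (X + Y)"
  have "(X + Y) + Z \<subseteq> P"
    unfolding Z_def by (simp flip: subset_orth_iff)
  then have "Y + (X + Z) \<subseteq> P"
    by (simp add: ac_simps)
  then have "biorth P Y + (X + Z) \<subseteq> P"
    by (simp only: biorth_add_subset_iff)
  then have "biorth P X + (biorth P Y + Z) \<subseteq> P"
    by (simp only: biorth_add_subset_iff add.left_commute[of X])
  then have "Z + (biorth P X + biorth P Y) \<subseteq> P"
    by (simp add: ac_simps)
  then show ?thesis
    unfolding Z_def by (simp only: subset_orth_iff)
qed

lemma biorth_Int:
  assumes "biorth P X = X" "biorth P Y = Y"
  shows "biorth P (X \<inter> Y) = X \<inter> Y"
proof (rule antisym)
  have "biorth P (X \<inter> Y) \<subseteq> biorth P X \<inter> biorth P Y"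
    by (simp add: orth_antimono)
  then show "biorth P (X \<inter> Y) \<subseteq> X \<inter> Y"
    using assms by simp
qed (rule subset_biorth)

lemma zero_in_sum_mset_sets: "(\<And>X. X \<in># Xs \<Longrightarrow> 0 \<in> X) \<Longrightarrow> 0 \<in> \<Sum>\<^sub># Xs"
proof (induction Xs)
  case (add X Xs)
  then have "0 + 0 \<in> X + \<Sum>\<^sub># Xs"
    by (intro set_plus_intro) auto
  then show ?case by simp
qed simp

lemma sum_mset_sets_mono:
  "(\<And>x. x \<in># M \<Longrightarrow> f x \<subseteq> g x) \<Longrightarrow> (\<Sum>x\<in>#M. f x) \<subseteq> (\<Sum>x\<in>#M. g x)"
  by (induction M) (simp_all add: set_plus_mono2)

lemma sum_mset_biorth_subset: "(\<Sum>x\<in>#M. biorth P (f x)) \<subseteq> biorth P (\<Sum>x\<in>#M. f x)"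
proof (induction M)
  case empty
  show ?case by (simp add: subset_biorth)
next
  case (add x M)
  then have "(\<Sum>x\<in>#add_mset x M. biorth P (f x)) \<subseteq> biorth P (f x) + biorth P (\<Sum>x\<in>#M. f x)"
    by (simp add: set_plus_mono2)
  also have "\<dots> \<subseteq> biorth P (\<Sum>x\<in>#add_mset x M. f x)"
    by (simp add: biorth_add_biorth)
  finally show ?case .
qed

text \<open>Exponentials use the submonoid \<open>{0}\<close> of idempotents: promotion works because a sum of
  subsets of \<open>{0}\<close> is again a subset of \<open>{0}\<close>.\<close>

definition ofc :: "'a::comm_monoid_add set \<Rightarrow> 'a set \<Rightarrow> 'a set" where
  "ofc P X = biorth P ({0} \<inter> X)"

lemma biorth_ofc [simp]: "biorth P (ofc P X) = ofc P X"
  by (simp add: ofc_def)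

lemma zero_in_ofc: "0 \<in> X \<Longrightarrow> 0 \<in> ofc P X"
  using subset_biorth unfolding ofc_def by blast

lemma ofc_add_subset_iff: "ofc P X + Y \<subseteq> P \<longleftrightarrow> (0 \<in> X \<longrightarrow> Y \<subseteq> P)"
  unfolding ofc_def biorth_add_subset_iff by (cases "0 \<in> X") (simp_all add: Int_absorb2)

lemma ofc_add_subset: "X + Y \<subseteq> P \<Longrightarrow> ofc P X + Y \<subseteq> P"
  using set_zero_plus2[of X Y] by (auto simp: ofc_add_subset_iff)

lemma sum_ofc_subset_ofc:
  assumes "(\<Sum>Y\<in>#Ys. ofc P Y) \<subseteq> X"
  shows "(\<Sum>Y\<in>#Ys. ofc P Y) \<subseteq> ofc P X"
proof -
  let ?Z = "\<Sum>Y\<in>#Ys. {0} \<inter> Y"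
  have "?Z \<subseteq> {0}"
    by (induction Ys) (auto simp: set_plus_def)
  moreover have "?Z \<subseteq> (\<Sum>Y\<in>#Ys. ofc P Y)"
    by (rule sum_mset_sets_mono) (simp add: ofc_def subset_biorth)
  ultimately have "biorth P ?Z \<subseteq> ofc P X"
    using assms unfolding ofc_def by (intro orth_antimono) blast
  moreover have "(\<Sum>Y\<in>#Ys. ofc P Y) \<subseteq> biorth P ?Z"
    unfolding ofc_def by (rule sum_mset_biorth_subset)
  ultimately show ?thesis by blast
qed

fun phase_sem :: "'a::comm_monoid_add set \<Rightarrow> ('b \<Rightarrow> 'a set) \<Rightarrow> 'b form \<Rightarrow> 'a set" where
  "phase_sem P v (Atom a) = biorth P (v a)"
| "phase_sem P v One = biorth P {0}"
| "phase_sem P v Bot = orth P {0}"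
| "phase_sem P v Top = UNIV"
| "phase_sem P v Zero = orth P UNIV"
| "phase_sem P v (Neg A) = orth P (phase_sem P v A)"
| "phase_sem P v (Tensor A B) = biorth P (phase_sem P v A + phase_sem P v B)"
| "phase_sem P v (Par A B) = orth P (orth P (phase_sem P v A) + orth P (phase_sem P v B))"
| "phase_sem P v (With A B) = phase_sem P v A \<inter> phase_sem P v B"
| "phase_sem P v (Plus A B) = biorth P (phase_sem P v A \<union> phase_sem P v B)"
| "phase_sem P v (Lolli A B) = orth P (phase_sem P v A + orth P (phase_sem P v B))"
| "phase_sem P v (OfCourse A) = ofc P (phase_sem P v A)"
| "phase_sem P v (WhyNot A) = orth P (ofc P (orth P (phase_sem P v A)))"

lemma biorth_phase_sem [simp]: "biorth P (phase_sem P v A) = phase_sem P v A"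
proof (induction A)
  case Top
  show ?case using subset_biorth[of UNIV P] by auto
next
  case (With A B)
  then show ?case by (simp add: biorth_Int)
qed simp_all

definition sequent_val :: "'a::comm_monoid_add set \<Rightarrow> ('b \<Rightarrow> 'a set) \<Rightarrow> 'b form multiset \<Rightarrow> 'b form multiset \<Rightarrow> 'a set" where
  "sequent_val P v G D = (\<Sum>A\<in>#G. phase_sem P v A) + (\<Sum>B\<in>#D. orth P (phase_sem P v B))"

lemma sequent_val_add_mset_left [simp]:
  "sequent_val P v (add_mset A G) D = phase_sem P v A + sequent_val P v G D"
  by (simp add: sequent_val_def add.assoc)

lemma sequent_val_add_mset_right [simp]:
  "sequent_val P v G (add_mset B D) = orth P (phase_sem P v B) + sequent_val P v G D"
  by (simp add: sequent_val_def ac_simps)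

lemma sequent_val_union:
  "sequent_val P v (G + G') (D + D') = sequent_val P v G D + sequent_val P v G' D'"
  by (simp add: sequent_val_def ac_simps)

lemma sequent_val_empty [simp]: "sequent_val P v {#} {#} = {0}"
  by (simp add: sequent_val_def)

lemma sequent_val_promotion_context:
  "sequent_val P v (image_mset OfCourse G) (image_mset WhyNot D)
     = (\<Sum>X\<in># image_mset (phase_sem P v) G + image_mset (orth P \<circ> phase_sem P v) D. ofc P X)"
  by (simp add: sequent_val_def image_mset.compositionality comp_def)

lemma zero_in_sequent_val_OfCourse:
  "(\<And>A. A \<in># G \<Longrightarrow> 0 \<in> phase_sem P v A) \<Longrightarrow> 0 \<in> sequent_val P v (image_mset OfCourse G) {#}"
  by (auto simp: sequent_val_def intro!: zero_in_sum_mset_sets zero_in_ofc)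

theorem derivable_sound: "derivable G D \<Longrightarrow> sequent_val P v G D \<subseteq> P"
proof (induction rule: derivable.induct)
  case (ax A)
  show ?case by (simp flip: subset_orth_iff)
next
  case (cut G A D G' D')
  then have "sequent_val P v G D \<subseteq> phase_sem P v A"
    by (simp add: orth_add_subset_iff)
  then have "sequent_val P v G D + sequent_val P v G' D' \<subseteq> phase_sem P v A + sequent_val P v G' D'"
    by (simp add: set_plus_mono2)
  with cut show ?case by (simp add: sequent_val_union)
next
  case oneR
  show ?case unfolding sequent_val_add_mset_right phase_sem.simps orth_biorth
    by (simp add: orth_zero)
next
  case botL
  show ?case by (simp add: orth_zero)
next
  case (tensorR G A D G' B D')
  then have "sequent_val P v G D \<subseteq> phase_sem P v A" "sequent_val P v G' D' \<subseteq> phase_sem P v B"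
    by (simp_all add: orth_add_subset_iff)
  then show ?case by (simp add: sequent_val_union orth_add_subset set_plus_mono2)
next
  case (parL A G D B G' D')
  then have "sequent_val P v G D \<subseteq> orth P (phase_sem P v A)"
    "sequent_val P v G' D' \<subseteq> orth P (phase_sem P v B)"
    by (simp_all add: subset_orth_iff)
  then show ?case by (simp add: sequent_val_union orth_add_subset set_plus_mono2)
next
  case (withL1 A G D B)
  then show ?case using set_plus_mono2[of "phase_sem P v A \<inter> phase_sem P v B" "phase_sem P v A"] by auto
next
  case (withL2 B G D A)
  then show ?case using set_plus_mono2[of "phase_sem P v A \<inter> phase_sem P v B" "phase_sem P v B"] by auto
next
  case (withR G A D B)
  then show ?case by (simp add: orth_add_subset_iff biorth_Int)
next
  case (plusR1 G A D B)
  then have "sequent_val P v G D \<subseteq> phase_sem P v A \<union> phase_sem P v B"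
    by (auto simp: orth_add_subset_iff)
  then show ?case by (simp add: orth_add_subset)
next
  case (plusR2 G B D A)
  then have "sequent_val P v G D \<subseteq> phase_sem P v A \<union> phase_sem P v B"
    by (auto simp: orth_add_subset_iff)
  then show ?case by (simp add: orth_add_subset)
next
  case (lolliL G A D B G' D')
  then have "sequent_val P v G D \<subseteq> phase_sem P v A"
    "sequent_val P v G' D' \<subseteq> orth P (phase_sem P v B)"
    by (simp_all add: orth_add_subset_iff subset_orth_iff)
  then show ?case by (simp add: sequent_val_union orth_add_subset set_plus_mono2)
next
  case (ocProm G A D)
  let ?S = "sequent_val P v (image_mset OfCourse G) (image_mset WhyNot D)"
  from ocProm have "?S \<subseteq> phase_sem P v A"
    by (simp add: orth_add_subset_iff)
  then have "?S \<subseteq> ofc P (phase_sem P v A)"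
    unfolding sequent_val_promotion_context by (rule sum_ofc_subset_ofc)
  then show ?case by (simp add: orth_add_subset)
next
  case (wnProm A G D)
  let ?S = "sequent_val P v (image_mset OfCourse G) (image_mset WhyNot D)"
  from wnProm have "?S \<subseteq> orth P (phase_sem P v A)"
    by (simp add: subset_orth_iff)
  then have "?S \<subseteq> ofc P (orth P (phase_sem P v A))"
    unfolding sequent_val_promotion_context by (rule sum_ofc_subset_ofc)
  then show ?case by (simp add: orth_add_subset)
next
  case (lolliR A G B D)
  then show ?case
    by (simp add: biorth_add_subset_iff add.assoc add.left_commute[of "orth P (phase_sem P v B)"])
next
  case (ocDer A G D)
  then show ?case by (simp add: ofc_add_subset)
next
  case (wnDer G A D)
  then show ?case by (simp add: ofc_add_subset)
qed (simp_all add: biorth_add_subset_iff ofc_add_subset_iff orth_add_subset Un_set_plus add.assoc)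

lemma zero_in_sem_Lolli_iff:
  "0 \<in> phase_sem P v (Lolli A B) \<longleftrightarrow> orth P (phase_sem P v B) \<subseteq> orth P (phase_sem P v A)"
  by (simp add: mem_orth_iff subset_orth_iff)

lemma orth_sem_Plus_iff [simp]:
  "y \<in> orth P (phase_sem P v (Plus A B))
     \<longleftrightarrow> y \<in> orth P (phase_sem P v A) \<and> y \<in> orth P (phase_sem P v B)"
  unfolding phase_sem.simps orth_biorth by (simp add: orth_Un)

lemma add_in_sem_Tensor:
  "x \<in> phase_sem P v A \<Longrightarrow> y \<in> phase_sem P v B \<Longrightarrow> x + y \<in> phase_sem P v (Tensor A B)"
  unfolding phase_sem.simps by (rule subsetD[OF subset_biorth]) (rule set_plus_intro)

text \<open>Unfolding is switched off so that the membership rewrites below apply before the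
  semantic clauses are expanded.\<close>

declare phase_sem.simps [simp del]

abbreviation free_sem :: "'b multiset set \<Rightarrow> 'b form \<Rightarrow> 'b multiset set" where
  "free_sem P \<equiv> phase_sem P (\<lambda>a. {{#a#}})"

lemma singleton_in_free_sem_Atom: "{#a#} \<in> free_sem P (Atom a)"
  using subset_biorth by (auto simp: phase_sem.simps)

lemma orth_free_sem_Atom_iff [simp]: "y \<in> orth P (free_sem P (Atom a)) \<longleftrightarrow> add_mset a y \<in> P"
  unfolding phase_sem.simps orth_biorth by (simp add: orth_def)

lemma orth_free_sem_Tensor_Atom_iff [simp]:
  "y \<in> orth P (free_sem P (Tensor (Atom a) (Atom b))) \<longleftrightarrow> add_mset a (add_mset b y) \<in> P"
  unfolding phase_sem.simps orth_biorth mem_orth_iff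
  by (simp add: biorth_add_subset_iff add.assoc add.left_commute[of "{{#a#}}"])

lemma mset_in_free_sem_big_tensor: "mset xs \<in> free_sem P (big_tensor (map Atom xs))"
proof (induction xs rule: induct_list012)
  case 1
  show ?case using subset_biorth by (auto simp: phase_sem.simps)
next
  case (2 x)
  show ?case using singleton_in_free_sem_Atom by simp
next
  case (3 x y zs)
  show ?case
    using add_in_sem_Tensor[OF singleton_in_free_sem_Atom[of x] 3(2)] by (simp add: add_mset_commute)
qed

definition encodes :: "nat \<Rightarrow> (nat \<Rightarrow> nat) \<Rightarrow> lit multiset \<Rightarrow> bool" where
  "encodes n c rs \<longleftrightarrow> (\<forall>m\<in>{1..n}. c m = count rs (R m))"

definition halts_cleanly :: "nat \<Rightarrow> machine \<Rightarrow> config \<Rightarrow> bool" where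
  "halts_cleanly n M C \<longleftrightarrow> (\<exists>c. reaches M C (0, c) \<and> (\<forall>m\<in>{1..n}. c m = 0))"

text \<open>A token multiset determines only the counters \<open>1..n\<close>, so acceptance is required for every
  valuation of the remaining counters.\<close>

definition accepts :: "nat \<Rightarrow> machine \<Rightarrow> nat \<Rightarrow> lit multiset \<Rightarrow> bool" where
  "accepts n M i rs \<longleftrightarrow>
     set_mset rs \<subseteq> R ` {1..n} \<and> (\<forall>c. encodes n c rs \<longrightarrow> halts_cleanly n M (i, c))"

lemma reaches_from_halt:
  assumes "wf_machine n M" "reaches M (0, c) C"
  shows "C = (0, c)"
proof -
  have "\<not> step M (0, c) C'" for C'
    using assms(1) by (auto simp: step_def wf_machine_def)
  with assms(2) show ?thesis
    unfolding reaches_def by (auto elim: converse_rtranclpE)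
qed

lemma accepts_halt_iff:
  assumes "wf_machine n M"
  shows "accepts n M 0 rs \<longleftrightarrow> rs = {#}"
proof
  assume acc: "accepts n M 0 rs"
  have "encodes n (\<lambda>m. count rs (R m)) rs"
    by (simp add: encodes_def)
  with acc have "\<forall>m\<in>{1..n}. count rs (R m) = 0"
    using reaches_from_halt[OF assms] by (fastforce simp: accepts_def halts_cleanly_def)
  with acc have "set_mset rs = {}"
    by (fastforce simp: accepts_def count_eq_zero_iff)
  then show "rs = {#}"
    by simp
qed (auto simp: accepts_def halts_cleanly_def encodes_def reaches_def)

lemma accepts_step_back:
  assumes "(i, I) \<in> set M" "set_mset rs \<subseteq> R ` {1..n}" "accepts n M j rs'"
    and "\<And>c. encodes n c rs \<Longrightarrow> \<exists>c'. instr_step I c (j, c') \<and> encodes n c' rs'"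
  shows "accepts n M i rs"
  unfolding accepts_def
proof (intro conjI allI impI)
  fix c
  assume "encodes n c rs"
  then obtain c' where "instr_step I c (j, c')" "encodes n c' rs'"
    using assms(4) by blast
  moreover from this(2) have "halts_cleanly n M (j, c')"
    using assms(3) by (simp add: accepts_def)
  ultimately show "halts_cleanly n M (i, c)"
    using assms(1) unfolding halts_cleanly_def reaches_def step_def
    by (fastforce intro: converse_rtranclp_into_rtranclp)
qed (fact assms(2))

lemma accepts_Inc:
  "(i, Inc m j) \<in> set M \<Longrightarrow> accepts n M j (add_mset (R m) rs) \<Longrightarrow> accepts n M i rs"
  by (rule accepts_step_back[where rs' = "add_mset (R m) rs"]) (auto simp: accepts_def encodes_def)

lemma accepts_Dec:
  "(i, Dec m j) \<in> set M \<Longrightarrow> m \<in> {1..n} \<Longrightarrow> accepts n M j rs \<Longrightarrow> accepts n M i (add_mset (R m) rs)"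
  by (rule accepts_step_back[where rs' = rs]) (auto simp: accepts_def encodes_def)

lemma accepts_JPos:
  "(i, JPos m j) \<in> set M \<Longrightarrow> m \<in> {1..n} \<Longrightarrow> accepts n M j (add_mset (R m) rs)
    \<Longrightarrow> accepts n M i (add_mset (R m) rs)"
  by (rule accepts_step_back[where rs' = "add_mset (R m) rs"]) (auto simp: accepts_def encodes_def)

lemma accepts_JZero:
  "(i, JZero m j) \<in> set M \<Longrightarrow> m \<in> {1..n} \<Longrightarrow> R m \<notin># rs \<Longrightarrow> accepts n M j rs
    \<Longrightarrow> accepts n M i rs"
  by (rule accepts_step_back[where rs' = rs]) (auto simp: accepts_def encodes_def not_in_iff)

definition minsky_pole :: "nat \<Rightarrow> machine \<Rightarrow> lit multiset set" where
  "minsky_pole n M =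
     {add_mset (Lab i) rs | i rs. accepts n M i rs} \<union>
     {add_mset (Kap m) rs | m rs. m \<in> {1..n} \<and> set_mset rs \<subseteq> R ` ({1..n} - {m})}"

lemma Lab_in_minsky_pole_iff [simp]:
  "add_mset (Lab i) rs \<in> minsky_pole n M \<longleftrightarrow> accepts n M i rs"
  by (auto simp: minsky_pole_def accepts_def add_eq_conv_ex)

lemma Kap_in_minsky_pole_iff [simp]:
  "add_mset (Kap m) rs \<in> minsky_pole n M \<longleftrightarrow> m \<in> {1..n} \<and> set_mset rs \<subseteq> R ` ({1..n} - {m})"
  by (auto simp: minsky_pole_def accepts_def add_eq_conv_ex)

lemma zero_in_sem_phi:
  assumes "wf_machine n M" "(i, I) \<in> set M"
  shows "0 \<in> free_sem (minsky_pole n M) (phi (i, I))"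
proof -
  have "instr_counter I \<in> {1..n}"
    using assms by (auto simp: wf_machine_def)
  with assms(2) show ?thesis
    by (cases I) (fastforce simp: zero_in_sem_Lolli_iff
        intro: accepts_Inc accepts_Dec accepts_JPos accepts_JZero)+
qed

lemma zero_in_sem_Kset:
  assumes "wf_machine n M" "A \<in># Kset n"
  shows "0 \<in> free_sem (minsky_pole n M) A"
proof -
  obtain m where m: "m \<in> {1..n}" "A \<in># Kset_m n m"
    using assms(2) by (auto simp: Kset_def set_mset_sum)
  then consider "A = Lolli (Atom (Kap m)) (Atom (Lab 0))"
    | i where "i \<in> {1..n}" "i \<noteq> m" "A = Lolli (Tensor (Atom (Kap m)) (Atom (R i))) (Atom (Kap m))"
    unfolding Kset_m_def by (auto simp del: upt_Suc)
  then show ?thesis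
    using m(1) by cases (auto simp: zero_in_sem_Lolli_iff accepts_halt_iff[OF assms(1)])
qed

lemma count_concat_replicate:
  "distinct ms \<Longrightarrow>
    count (mset (concat (map (\<lambda>i. replicate (k i) (R i)) ms))) (R m) = (if m \<in> set ms then k m else 0)"
  by (induction ms) auto

lemma encodes_initial_counters:
  "encodes n k (mset (concat (map (\<lambda>i. replicate (k i) (R i)) [1..<n+1])))"
  by (simp add: encodes_def count_concat_replicate atLeastLessThanSuc_atLeastAtMost del: upt_Suc)

theorem theorem3:
  fixes n :: nat and M :: machine and k :: "nat \<Rightarrow> nat"
  assumes "wf_machine n M"
    and "derivable
           (add_mset (init_formula n k)
              (image_mset OfCourse (Phi M) + image_mset OfCourse (Kset n)))
           {#Atom (Lab 0)#}"
  shows "\<exists>c. reaches M (1, k) (0, c) \<and> (\<forall>i \<in> {1..n}. c i = 0)"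
proof -
  let ?P = "minsky_pole n M" and ?v = "\<lambda>a. {{#a#}}"
  define xs where "xs = concat (map (\<lambda>i. replicate (k i) (R i)) [1..<n+1])"
  have "0 \<in> orth ?P (free_sem ?P (Atom (Lab 0)))"
    using accepts_halt_iff[OF assms(1)] by simp
  moreover have "add_mset (Lab 1) (mset xs) \<in> free_sem ?P (init_formula n k)"
    using mset_in_free_sem_big_tensor[of "Lab 1 # xs" ?P]
    by (simp add: init_formula_def xs_def map_concat comp_def del: upt_Suc)
  moreover have "0 \<in> sequent_val ?P ?v (image_mset OfCourse (Phi M + Kset n)) {#}"
    using zero_in_sem_phi[OF assms(1)] zero_in_sem_Kset[OF assms(1)]
    by (intro zero_in_sequent_val_OfCourse) (auto simp: Phi_def)
  ultimately have "0 + (add_mset (Lab 1) (mset xs) + 0) \<in> sequent_val ?P ?v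
      (add_mset (init_formula n k) (image_mset OfCourse (Phi M + Kset n))) {#Atom (Lab 0)#}"
    by (simp only: sequent_val_add_mset_left sequent_val_add_mset_right) (intro set_plus_intro)
  then have "accepts n M 1 (mset xs)"
    using derivable_sound[OF assms(2), of ?P ?v] by auto
  with encodes_initial_counters[of n k] show ?thesis
    by (auto simp: accepts_def halts_cleanly_def xs_def)
qed

end
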